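(* Let $n\ge 4$ with $n\equiv 2\pmod 6$, and let $G=P_4\cup P_{n-4}$ (disjoint union of a path on $4$ vertices and a path on $n-4$ vertices). Then $\operatorname{rank}(A_G+I_n)=\operatorname{rank}(A_{\overline G}+I_n)=n$.
   Context: All graphs are simple. $P_m$ is the path on $m$ vertices and $\cup$ denotes disjoint union of graphs. $A_G$ denotes the $n\times n$ adjacency matrix of $G$, $\overline{G}$ the complement of $G$, $I_n$ the identity matrix, and rank is over $\mathbb{R}$. *)

theory Defs
  imports "Jordan_Normal_Form.DL_Rank"
begin

text \<open>Simple graphs on the vertex set {0..<n} are given by a symmetric irreflexive
  edge relation E :: nat \<Rightarrow> nat \<Rightarrow> bool (only its restriction to {0..<n} matters).\<close>

definition path_edges :: "nat \<Rightarrow> nat \<Rightarrow> nat \<Rightarrow> nat \<Rightarrow> bool" where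
  "path_edges a b i j \<longleftrightarrow> a \<le> i \<and> i < b \<and> a \<le> j \<and> j < b \<and> (i = j + 1 \<or> j = i + 1)"

text \<open>Disjoint union of graphs living on disjoint vertex sets.\<close>
definition graph_union :: "(nat \<Rightarrow> nat \<Rightarrow> bool) \<Rightarrow> (nat \<Rightarrow> nat \<Rightarrow> bool) \<Rightarrow> nat \<Rightarrow> nat \<Rightarrow> bool" where
  "graph_union E F i j \<longleftrightarrow> E i j \<or> F i j"

definition P4_union_path :: "nat \<Rightarrow> nat \<Rightarrow> nat \<Rightarrow> bool" where
  "P4_union_path n = graph_union (path_edges 0 4) (path_edges 4 n)"

definition graph_complement :: "(nat \<Rightarrow> nat \<Rightarrow> bool) \<Rightarrow> nat \<Rightarrow> nat \<Rightarrow> bool" where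
  "graph_complement E i j \<longleftrightarrow> i \<noteq> j \<and> \<not> E i j"

definition adj_matrix :: "nat \<Rightarrow> (nat \<Rightarrow> nat \<Rightarrow> bool) \<Rightarrow> real mat" where
  "adj_matrix n E = mat n n (\<lambda>(i, j). if E i j then 1 else 0)"

definition real_rank :: "nat \<Rightarrow> real mat \<Rightarrow> nat" where
  "real_rank n A = vec_space.rank n A"

end

theory Submission
  imports Defs
begin

text \<open>Restrict a kernel vector to the two path components. On a path P_m the equations of
  (A + I) y = 0 read y(k-1) + y(k) + y(k+1) = 0, which forces y to be y(0) times the 3-periodic
  pattern 1, -1, 0; the equation at the last vertex then kills y(0) unless m = 2 (mod 3), and
  here m = 4 and m = n - 4 are both 1 (mod 3).

  For the complement, the adjacency matrix plus I equals J - A, so a kernel vector has every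
  neighbour sum equal to s, the sum of all its entries. On a path of even length m this makes y
  4-periodic and determined by s, with sum c * s for some c \<ge> 0 (c = 2 for P_4). Adding up
  both paths gives s = (2 + c) * s, hence s = 0, and then the vector vanishes.\<close>

definition path_nbr_sum :: "nat \<Rightarrow> (nat \<Rightarrow> real) \<Rightarrow> nat \<Rightarrow> real" where
  "path_nbr_sum m y k = (if 0 < k then y (k - 1) else 0) + (if k + 1 < m then y (k + 1) else 0)"

lemma path_plus_identity_kernel_trivial:
  fixes y :: "nat \<Rightarrow> real"
  assumes rows: "\<And>k. k < m \<Longrightarrow> y k + path_nbr_sum m y k = 0"
    and m: "m mod 3 \<noteq> 2" and k: "k < m"
  shows "y k = 0"
proof -
  define c :: "nat \<Rightarrow> real" where "c i = (if i mod 3 = 0 then 1 else if i mod 3 = 1 then -1 else 0)" for i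
  have pattern: "y i = c i * y 0" if "i < m" for i
    using that
  proof (induction i rule: less_induct)
    case (less i)
    consider "i = 0" | "i = 1" | j where "i = j + 2" by (metis One_nat_def add_2_eq_Suc' not0_implies_Suc)
    then show ?case
    proof cases
      case 2
      then show ?thesis using rows[of 0] less.prems by (simp add: c_def path_nbr_sum_def)
    next
      case 3
      have "y (j + 2) = - y j - y (j + 1)"
        using rows[of "j + 1"] less.prems 3 by (simp add: path_nbr_sum_def algebra_simps)
      also have "\<dots> = (- c j - c (j + 1)) * y 0"
        using less.IH[of j] less.IH[of "j + 1"] less.prems 3 by (simp add: algebra_simps)
      also have "- c j - c (j + 1) = c (j + 2)" unfolding c_def by (auto simp: mod_Suc)
      finally show ?thesis using 3 by simp
    qed (simp add: c_def)
  qed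
  show ?thesis
  proof (cases "m = 1")
    case True
    then show ?thesis using rows[of 0] k by (simp add: path_nbr_sum_def)
  next
    case False
    define j where "j = m - 2"
    have j: "m = j + 2" using k False unfolding j_def by linarith
    have "y j + y (j + 1) = 0"
      using rows[of "j + 1"] j by (simp add: path_nbr_sum_def)
    then have "(c j + c (j + 1)) * y 0 = 0"
      using pattern[of j] pattern[of "j + 1"] j by (simp add: algebra_simps)
    moreover have "j mod 3 = 1 \<or> j mod 3 = 2" using m j by presburger
    then have "c j + c (j + 1) \<noteq> 0" unfolding c_def by (auto simp: mod_Suc)
    ultimately show ?thesis using pattern[OF k] by simp
  qed
qed

lemma path_nbr_sum_const_step:
  fixes y :: "nat \<Rightarrow> real"
  assumes rows: "\<And>k. k < m \<Longrightarrow> path_nbr_sum m y k = s" and "k + 2 < m"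
  shows "y k + y (k + 2) = s"
  using rows[of "k + 1"] assms(2) by (simp add: path_nbr_sum_def)

lemma path_nbr_sum_const_periodic:
  fixes y :: "nat \<Rightarrow> real"
  assumes rows: "\<And>k. k < m \<Longrightarrow> path_nbr_sum m y k = s" and "k < m"
  shows "y k = y (k mod 4)"
  using assms(2)
proof (induction k rule: less_induct)
  case (less k)
  show ?case
  proof (cases "k < 4")
    case False
    define i where "i = k - 4"
    have k: "k = i + 2 + 2" using False unfolding i_def by simp
    have "y i + y (i + 2) = s" "y (i + 2) + y (i + 2 + 2) = s"
      using path_nbr_sum_const_step[OF rows, of i] path_nbr_sum_const_step[OF rows, of "i + 2"]
        k less.prems by simp_all
    then have "y k = y i" unfolding k by linarith
    then show ?thesis using less.IH[of i] k less.prems by simp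
  qed simp
qed

lemma path_nbr_sum_const_at_1:
  fixes y :: "nat \<Rightarrow> real"
  assumes rows: "\<And>k. k < m \<Longrightarrow> path_nbr_sum m y k = s" and "1 < m"
  shows "y 1 = s"
  using rows[of 0] assms(2) by (simp add: path_nbr_sum_def)

lemma path_nbr_sum_const_at_0:
  fixes y :: "nat \<Rightarrow> real"
  assumes rows: "\<And>k. k < m \<Longrightarrow> path_nbr_sum m y k = s" and "even m" and "2 \<le> m"
  shows "y 0 = (if 4 dvd m then 0 else s)"
proof -
  define j where "j = m - 2"
  have j: "m = j + 2" using assms(3) unfolding j_def by linarith
  then have "y j = s"
    using rows[of "j + 1"] by (simp add: path_nbr_sum_def)
  moreover have "y j = y (j mod 4)" using path_nbr_sum_const_periodic[OF rows, of j] j by simp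
  ultimately have last: "y (j mod 4) = s" by simp
  show ?thesis
  proof (cases "4 dvd m")
    case True
    then have "j mod 4 = 2" using j by presburger
    then have "y 2 = s" "0 + 2 < m" using last j by auto
    then have "y 0 + y 2 = s" "y 2 = s"
      using path_nbr_sum_const_step[OF rows, of 0] by (simp_all add: numeral_2_eq_2)
    then show ?thesis using True by simp
  next
    case False
    then have "j mod 4 = 0" using assms(2) j by presburger
    then show ?thesis using last False by simp
  qed
qed

lemma path_nbr_sum_const_block_sum:
  fixes y :: "nat \<Rightarrow> real"
  assumes rows: "\<And>k. k < m \<Longrightarrow> path_nbr_sum m y k = s" and "4 * j \<le> m"
  shows "(\<Sum>k<4 * j. y k) = 2 * j * s"
  using assms(2)
proof (induction j)
  case (Suc j)
  have "(\<Sum>k<4 * Suc j. y k)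
      = (\<Sum>k<4 * j. y k) + (y (4 * j) + y (4 * j + 2)) + (y (4 * j + 1) + y (4 * j + 1 + 2))"
    by (simp add: numeral_eq_Suc)
  also have "\<dots> = 2 * j * s + s + s"
    using Suc path_nbr_sum_const_step[OF rows, of "4 * j"] path_nbr_sum_const_step[OF rows, of "4 * j + 1"]
    by simp
  finally show ?case by (simp add: algebra_simps)
qed simp

lemma path_nbr_sum_const_sum:
  fixes y :: "nat \<Rightarrow> real"
  assumes rows: "\<And>k. k < m \<Longrightarrow> path_nbr_sum m y k = s" and "even m"
  shows "(\<Sum>k<m. y k) = (if 4 dvd m then real m / 2 else real m / 2 + 1) * s"
proof (cases "4 dvd m")
  case True
  then obtain j where "m = 4 * j" by blast
  then show ?thesis using path_nbr_sum_const_block_sum[OF rows, of j] by simp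
next
  case False
  define j where "j = m div 4"
  have m: "m = 4 * j + 2" using False assms(2) unfolding j_def by presburger
  have "(\<Sum>k<m. y k) = (\<Sum>k<4 * j. y k) + y (4 * j) + y (4 * j + 1)"
    unfolding m by (simp add: numeral_eq_Suc)
  also have "\<dots> = 2 * j * s + y 0 + y 1"
    using path_nbr_sum_const_block_sum[OF rows, of j] path_nbr_sum_const_periodic[OF rows, of "4 * j"]
      path_nbr_sum_const_periodic[OF rows, of "4 * j + 1"] m by simp
  also have "\<dots> = (2 * j + 2) * s"
    using path_nbr_sum_const_at_0[OF rows assms(2)] path_nbr_sum_const_at_1[OF rows] m False
    by (simp add: algebra_simps)
  finally show ?thesis using m False by (simp add: field_simps)
qed

lemma path_nbr_sum_zero_imp_zero:
  fixes y :: "nat \<Rightarrow> real"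
  assumes rows: "\<And>k. k < m \<Longrightarrow> path_nbr_sum m y k = 0" and "even m" and "k < m"
  shows "y k = 0"
proof -
  have "2 \<le> m" using assms(2,3) by presburger
  then have y01: "y 0 = 0" "y 1 = 0"
    using path_nbr_sum_const_at_0[OF rows assms(2)] path_nbr_sum_const_at_1[OF rows] by simp_all
  have "y i = 0" if "i < 4" "i < m" for i
  proof -
    consider "i = 0" | "i = 1" | "i = 0 + 2" | "i = 1 + 2" using \<open>i < 4\<close> by linarith
    then show ?thesis
      using y01 path_nbr_sum_const_step[OF rows, of 0] path_nbr_sum_const_step[OF rows, of 1] \<open>i < m\<close>
      by cases simp_all
  qed
  moreover have "k mod 4 < m" using assms(3) by (meson le_less_trans mod_less_eq_dividend)
  ultimately show ?thesis using path_nbr_sum_const_periodic[OF rows assms(3)] by simp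
qed

lemma sum_lessThan_split:
  fixes f :: "nat \<Rightarrow> 'a::comm_monoid_add"
  assumes "k \<le> n"
  shows "(\<Sum>j<n. f j) = (\<Sum>j<k. f j) + (\<Sum>j<n - k. f (k + j))"
proof -
  have "(\<Sum>j<n. f j) = (\<Sum>j<k. f j) + (\<Sum>j=k..<n. f j)"
    using assms by (simp add: lessThan_atLeast0 sum.atLeastLessThan_concat)
  also have "(\<Sum>j=k..<n. f j) = (\<Sum>j<n - k. f (k + j))"
    using sum.shift_bounds_nat_ivl[of f 0 k "n - k"] assms by (simp add: lessThan_atLeast0 add.commute)
  finally show ?thesis .
qed

lemma real_rank_eq_if_kernel_trivial:
  fixes A :: "real mat"
  assumes A: "A \<in> carrier_mat n n"
    and kernel: "\<And>v. v \<in> carrier_vec n \<Longrightarrow> A *\<^sub>v v = 0\<^sub>v n \<Longrightarrow> v = 0\<^sub>v n"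
  shows "real_rank n A = n"
proof -
  have "det A \<noteq> 0" using det_0_iff_vec_prod_zero_field[OF A] kernel by auto
  then show ?thesis unfolding real_rank_def using vec_space.low_rank_det_zero[OF A] by blast
qed

definition neighbours :: "nat \<Rightarrow> (nat \<Rightarrow> nat \<Rightarrow> bool) \<Rightarrow> nat \<Rightarrow> nat set" where
  "neighbours n E i = {j. j < n \<and> E i j}"

lemma adj_matrix_plus_one_mult_vec_index:
  assumes "v \<in> carrier_vec n" "i < n"
  shows "((adj_matrix n E + 1\<^sub>m n) *\<^sub>v v) $ i = v $ i + sum (($) v) (neighbours n E i)"
proof -
  have "((adj_matrix n E + 1\<^sub>m n) *\<^sub>v v) $ i
      = (\<Sum>j<n. ((if E i j then 1 else 0) + (if i = j then 1 else 0)) * v $ j)"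
    using assms by (auto simp: adj_matrix_def scalar_prod_def atLeast0LessThan intro!: sum.cong)
  also have "\<dots> = (\<Sum>j<n. if E i j then v $ j else 0) + (\<Sum>j<n. if i = j then v $ j else 0)"
    by (subst sum.distrib[symmetric], rule sum.cong) auto
  finally show ?thesis
    using assms by (simp add: sum.inter_filter[symmetric] neighbours_def)
qed

lemma complement_adj_matrix_plus_one_mult_vec_index:
  assumes "v \<in> carrier_vec n" "i < n" "\<not> E i i"
  shows "((adj_matrix n (graph_complement E) + 1\<^sub>m n) *\<^sub>v v) $ i
       = (\<Sum>j<n. v $ j) - sum (($) v) (neighbours n E i)"
proof -
  have "((adj_matrix n (graph_complement E) + 1\<^sub>m n) *\<^sub>v v) $ i
      = (\<Sum>j<n. v $ j) - (\<Sum>j<n. (if E i j then v $ j else 0))"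
    using assms by (auto simp: adj_matrix_def graph_complement_def scalar_prod_def atLeast0LessThan
        sum_subtractf[symmetric] intro!: sum.cong)
  then show ?thesis
    using assms by (simp add: sum.inter_filter[symmetric] neighbours_def)
qed

lemma P4_union_path_irrefl: "\<not> P4_union_path n i i"
  by (simp add: P4_union_path_def graph_union_def path_edges_def)

text \<open>The components of \<open>P4_union_path n\<close> are the paths on the vertex intervals \<open>{a..<a + m}\<close>.\<close>

definition P4_union_path_component :: "nat \<Rightarrow> nat \<Rightarrow> nat \<Rightarrow> bool" where
  "P4_union_path_component n a m \<longleftrightarrow> (a, m) = (0, 4) \<or> (a, m) = (4, n - 4)"

lemma P4_union_path_component_cases:
  assumes "4 \<le> n" "i < n"
  obtains a m k where "P4_union_path_component n a m" "k < m" "i = a + k"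
proof (cases "i < 4")
  case True
  then show ?thesis using that[of 0 4 i] by (simp add: P4_union_path_component_def)
next
  case False
  then show ?thesis using that[of 4 "n - 4" "i - 4"] assms by (simp add: P4_union_path_component_def)
qed

lemma P4_union_path_neighbour_sum:
  assumes "4 \<le> n" "P4_union_path_component n a m" "k < m"
  shows "sum (($) v) (neighbours n (P4_union_path n) (a + k)) = path_nbr_sum m (\<lambda>j. v $ (a + j)) k"
proof -
  have "neighbours n (P4_union_path n) (a + k)
      = (if 0 < k then {a + (k - 1)} else {}) \<union> (if k + 1 < m then {a + (k + 1)} else {})"
    using assms by (auto simp: P4_union_path_component_def neighbours_def P4_union_path_def
        graph_union_def path_edges_def)
  then show ?thesis by (simp add: path_nbr_sum_def)
qed

lemma P4_union_path_plus_one_kernel: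
  assumes "4 \<le> n" "n mod 3 = 2" and v: "v \<in> carrier_vec n"
    and kernel: "(adj_matrix n (P4_union_path n) + 1\<^sub>m n) *\<^sub>v v = 0\<^sub>v n"
  shows "v = 0\<^sub>v n"
proof -
  have component_zero: "v $ (a + k) = 0" if a: "P4_union_path_component n a m" and "k < m" for a m k
  proof (rule path_plus_identity_kernel_trivial[where y = "\<lambda>j. v $ (a + j)"])
    have "k mod 3 \<noteq> 2" if "(k + 4) mod 3 = 2" for k :: nat using that by presburger
    from this[of "n - 4"] show "m mod 3 \<noteq> 2"
      using a assms(1,2) unfolding P4_union_path_component_def by auto
    fix j assume "j < m"
    then have "a + j < n" using a assms(1) unfolding P4_union_path_component_def by auto
    then show "v $ (a + j) + path_nbr_sum m (\<lambda>j. v $ (a + j)) j = 0"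
      using adj_matrix_plus_one_mult_vec_index[OF v] kernel
        P4_union_path_neighbour_sum[OF assms(1) a \<open>j < m\<close>] by (metis index_zero_vec(1))
  qed fact
  have "v $ i = 0" if "i < n" for i
    by (rule P4_union_path_component_cases[OF assms(1) that]) (simp add: component_zero)
  then show ?thesis using v by (intro eq_vecI) auto
qed

lemma P4_union_path_complement_plus_one_kernel:
  assumes "4 \<le> n" "even n" and v: "v \<in> carrier_vec n"
    and kernel: "(adj_matrix n (graph_complement (P4_union_path n)) + 1\<^sub>m n) *\<^sub>v v = 0\<^sub>v n"
  shows "v = 0\<^sub>v n"
proof -
  define s where "s = (\<Sum>j<n. v $ j)"
  define c where "c = (if 4 dvd (n - 4) then real (n - 4) / 2 else real (n - 4) / 2 + 1)"
  have component_rows: "path_nbr_sum m (\<lambda>j. v $ (a + j)) k = s"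
    if a: "P4_union_path_component n a m" and "k < m" for a m k
  proof -
    have "a + k < n" using a \<open>k < m\<close> assms(1) unfolding P4_union_path_component_def by auto
    then show ?thesis
      using complement_adj_matrix_plus_one_mult_vec_index[where E = "P4_union_path n",
          OF v \<open>a + k < n\<close> P4_union_path_irrefl] kernel
        P4_union_path_neighbour_sum[OF assms(1) a \<open>k < m\<close>]
      unfolding s_def by (metis index_zero_vec(1) eq_iff_diff_eq_0)
  qed
  have component_even: "even m" if "P4_union_path_component n a m" for a m
    using that assms(2) unfolding P4_union_path_component_def by auto
  have component_sum: "(\<Sum>k<m. v $ (a + k)) = (if 4 dvd m then real m / 2 else real m / 2 + 1) * s"
    if "P4_union_path_component n a m" for a m
    using path_nbr_sum_const_sum[OF component_rows[OF that] component_even[OF that]] .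
  have "s = (\<Sum>k<4. v $ (0 + k)) + (\<Sum>k<n - 4. v $ (4 + k))"
    unfolding s_def using sum_lessThan_split[OF assms(1)] by simp
  also have "\<dots> = 2 * s + c * s"
    using component_sum[of 0 4] component_sum[of 4 "n - 4"]
    unfolding P4_union_path_component_def c_def by simp
  finally have "(1 + c) * s = 0" by (simp add: algebra_simps)
  moreover have "0 \<le> c" unfolding c_def by simp
  ultimately have "s = 0" by simp
  have component_zero: "v $ (a + k) = 0" if "P4_union_path_component n a m" "k < m" for a m k
    using path_nbr_sum_zero_imp_zero[OF component_rows[OF that(1), unfolded \<open>s = 0\<close>]
        component_even[OF that(1)] that(2)]
    by simp
  have "v $ i = 0" if "i < n" for i
    by (rule P4_union_path_component_cases[OF assms(1) that]) (simp add: component_zero)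
  then show ?thesis using v by (intro eq_vecI) auto
qed

theorem proposition5p7:
  fixes n :: nat
  assumes "n \<ge> 4" and "n mod 6 = 2"
  shows "real_rank n (adj_matrix n (P4_union_path n) + 1\<^sub>m n) = n
       \<and> real_rank n (adj_matrix n (graph_complement (P4_union_path n)) + 1\<^sub>m n) = n"
proof
  have "n mod 3 = 2" "even n" using assms(2) by presburger+
  show "real_rank n (adj_matrix n (P4_union_path n) + 1\<^sub>m n) = n"
    by (rule real_rank_eq_if_kernel_trivial)
      (auto simp: adj_matrix_def intro: P4_union_path_plus_one_kernel[OF assms(1) \<open>n mod 3 = 2\<close>])
  show "real_rank n (adj_matrix n (graph_complement (P4_union_path n)) + 1\<^sub>m n) = n"
    by (rule real_rank_eq_if_kernel_trivial)
      (auto simp: adj_matrix_def intro: P4_union_path_complement_plus_one_kernel[OF assms(1) \<open>even n\<close>])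
qed

end
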